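(* Let $d\ge3$, $\beta>0$, $g:\mathbb{R}^d\to\mathbb{R}$ Lipschitz. There are positive constants $C_1,C_2$ depending only on $d,\beta,g$ such that for any $\varepsilon>0$, $s,t\in\mathbb{Z}_{\ge0}$ and $x\in\mathbb{Z}^d$, \[ |G_\varepsilon(s,x)-G_\varepsilon(t,x)|\le C_1\varepsilon|t-s|^{1/2}e^{C_2(\varepsilon|x|+\varepsilon^2s+\varepsilon^2t)}. \]
   Context: $\{S_n\}_{n\ge0}$ is simple symmetric random walk on $\mathbb{Z}^d$ started at the origin; $g_\varepsilon(x)=g(\varepsilon x)$ and $G_\varepsilon(t,x)=\mathbb{E}(e^{\beta g_\varepsilon(S_t+x)})$ for $t\in\mathbb{Z}_{\ge0}$, $x\in\mathbb{Z}^d$. *)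

theory Defs
  imports "HOL-Analysis.Analysis" "HOL-Probability.Probability"
begin

text \<open>Lattice Z^d is represented as int ^ 'd (the dimension d = CARD('d)).
  One step of simple symmetric random walk: uniform over the 2d vectors \<plusminus>e_i.\<close>

definition srw_step :: "(int ^ 'd) pmf" where
  "srw_step = pmf_of_set {v. \<exists>i. v = axis i 1 \<or> v = axis i (-1)}"

fun srw :: "nat \<Rightarrow> (int ^ 'd) pmf" where
  "srw 0 = return_pmf 0"
| "srw (Suc n) = map_pmf (\<lambda>(a, b). a + b) (pair_pmf (srw n) srw_step)"

definition real_vec :: "int ^ 'd \<Rightarrow> real ^ 'd" where
  "real_vec x = (\<chi> i. real_of_int (x $ i))"

definition G_eps :: "real \<Rightarrow> (real ^ 'd \<Rightarrow> real) \<Rightarrow> real \<Rightarrow> nat \<Rightarrow> int ^ 'd \<Rightarrow> real" where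
  "G_eps \<beta> g \<epsilon> t x =
     measure_pmf.expectation (srw t) (\<lambda>S. exp (\<beta> * g (\<epsilon> *\<^sub>R real_vec (S + x))))"

end

theory Submission
  imports Defs
begin

text \<open>By the Markov property \<open>G(s + n, x) = E G(n, S\<^sub>s + x)\<close>, so \<open>G(s, x) - G(s + n, x)\<close> is
  the expectation of \<open>G(0, y) - G(n, y)\<close> at \<open>y = S\<^sub>s + x\<close>. With \<open>c = \<beta> L \<epsilon>\<close> the potential
  \<open>h = \<beta> g(\<epsilon> \<cdot>)\<close> is \<open>c\<close>-Lipschitz, hence
  \<open>|exp h(y) - exp h(y + b)| \<le> c |b| exp (h(0) + c |y| + c |b|)\<close>. This reduces the estimate to
  the exponential moments \<open>E exp (c |S\<^sub>n|) \<le> 2d exp (d c\<^sup>2 n)\<close> and \<open>E |S\<^sub>n| exp (c |S\<^sub>n|)\<close>, the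
  latter of order \<open>sqrt n\<close>; both follow coordinatewise from the sub-Gaussian bound
  \<open>cosh a \<le> exp (a\<^sup>2)\<close> for a single step.\<close>

lemma srw_step_set_eq:
  "{v. \<exists>i. v = axis i 1 \<or> v = axis i (-1)} = range (\<lambda>i. axis i 1) \<union> range (\<lambda>i. axis i (-1 :: int))"
  by auto

lemma set_pmf_srw_step: "set_pmf srw_step = {v. \<exists>i. v = axis i 1 \<or> v = axis i (-1)}"
  unfolding srw_step_def by (rule set_pmf_of_set) (auto simp: srw_step_set_eq)

lemma finite_set_pmf_srw_step [simp]: "finite (set_pmf srw_step)"
  unfolding set_pmf_srw_step srw_step_set_eq by simp

lemma srw_step_abs_nth_le_1:
  assumes "v \<in> set_pmf srw_step"
  shows "\<bar>v $ j\<bar> \<le> 1"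
  using assms by (auto simp: set_pmf_srw_step axis_def)

lemma uminus_axis: "- axis i a = axis i (- a :: 'a :: ab_group_add)"
  by (simp add: vec_eq_iff axis_def)

lemma map_pmf_uminus_srw_step: "map_pmf uminus srw_step = srw_step"
proof -
  let ?V = "{v :: int ^ 'd. \<exists>i. v = axis i 1 \<or> v = axis i (-1)}"
  have "map_pmf uminus (pmf_of_set ?V) = pmf_of_set (uminus ` ?V)"
    by (rule map_pmf_of_set_inj) (auto simp: srw_step_set_eq)
  also have "uminus ` ?V = ?V"
    by (force simp: image_iff uminus_axis minus_equation_iff)
  finally show ?thesis
    unfolding srw_step_def .
qed

lemma finite_set_pmf_srw [simp]: "finite (set_pmf (srw n))"
  by (induction n) auto

lemma integrable_srw [simp]: "integrable (measure_pmf (srw n)) (f :: _ \<Rightarrow> real)"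
  by (simp add: integrable_measure_pmf_finite)

lemma integrable_srw_step [simp]: "integrable (measure_pmf srw_step) (f :: _ \<Rightarrow> real)"
  by (simp add: integrable_measure_pmf_finite)

lemma srw_Suc_bind: "srw (Suc n) = srw n \<bind> (\<lambda>a. map_pmf ((+) a) srw_step)"
  by (simp add: pair_pmf_def map_bind_pmf bind_map_pmf map_pmf_def bind_assoc_pmf bind_return_pmf)

lemma srw_add: "srw (m + n) = srw m \<bind> (\<lambda>a. map_pmf ((+) a) (srw n))"
proof (induction n)
  case 0
  then show ?case by (simp add: map_pmf_def bind_return_pmf bind_return_pmf')
next
  case (Suc n)
  then show ?case
    unfolding add_Suc_right srw_Suc_bind
    by (simp add: map_pmf_def bind_assoc_pmf bind_return_pmf add.assoc)
qed

lemma expectation_bind_pmf_finite: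
  fixes h :: "'b \<Rightarrow> real"
  assumes "finite (set_pmf p)" "\<And>a. finite (set_pmf (f a))"
  shows "measure_pmf.expectation (p \<bind> f) h
       = measure_pmf.expectation p (\<lambda>a. measure_pmf.expectation (f a) h)"
  using assms
  by (subst pmf_expectation_bind[where A = "set_pmf p"])
     (auto simp: integral_measure_pmf[where A = "set_pmf p"])

lemma cosh_le_exp_power2: "cosh x \<le> exp (x\<^sup>2)" for x :: real
proof -
  have "cosh x \<le> exp (x\<^sup>2)" if "x \<ge> 0" for x :: real
  proof (cases "x \<le> 1")
    case True
    have "exp x \<le> 1 + x + x\<^sup>2"
      using exp_bound[of x] that True by simp
    moreover have "exp (- x) \<le> 1 - x + x\<^sup>2"
    proof -
      have "1 \<le> (1 + x) * (1 - x + x\<^sup>2)"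
        using that by (simp add: algebra_simps power2_eq_square power3_eq_cube)
      also have "\<dots> \<le> exp x * (1 - x + x\<^sup>2)"
        using exp_ge_add_one_self[of x] by (rule mult_right_mono) (use True zero_le_power2[of x] in linarith)
      finally show ?thesis
        by (simp add: exp_minus field_simps)
    qed
    ultimately have "cosh x \<le> 1 + x\<^sup>2"
      by (simp add: cosh_field_def)
    also have "\<dots> \<le> exp (x\<^sup>2)"
      using exp_ge_add_one_self[of "x\<^sup>2"] by simp
    finally show ?thesis .
  next
    case False
    have "exp (- x) \<le> exp x" and "exp x \<le> exp (x\<^sup>2)"
      using that False by (auto simp: power2_eq_square)
    then have "exp x + exp (- x) \<le> 2 * exp (x\<^sup>2)"
      by linarith
    then show ?thesis
      by (simp add: cosh_field_def)
  qed
  from this[of x] this[of "- x"] show ?thesis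
    by (cases "x \<ge> 0") auto
qed

lemma srw_step_mgf_le:
  fixes a :: real
  shows "measure_pmf.expectation srw_step (\<lambda>v :: int ^ 'd. exp (a * real_of_int (v $ j))) \<le> exp (a\<^sup>2)"
proof -
  let ?F = "\<lambda>v :: int ^ 'd. exp (a * real_of_int (v $ j))"
  have "measure_pmf.expectation srw_step (\<lambda>v. ?F (- v))
      = measure_pmf.expectation (map_pmf uminus srw_step) ?F"
    by simp
  then have "measure_pmf.expectation srw_step ?F
      = measure_pmf.expectation srw_step (\<lambda>v. (?F v + ?F (- v)) / 2)"
    by (simp add: map_pmf_uminus_srw_step integral_add)
  also have "\<dots> = measure_pmf.expectation srw_step (\<lambda>v. cosh (a * real_of_int (v $ j)))"
    by (simp add: cosh_field_def)
  also have "\<dots> \<le> exp (a\<^sup>2)"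
  proof (rule measure_pmf.integral_le_const)
    show "AE v in measure_pmf srw_step. cosh (a * real_of_int (v $ j)) \<le> exp (a\<^sup>2)"
    proof (rule AE_pmfI)
      fix v :: "int ^ 'd"
      assume "v \<in> set_pmf srw_step"
      then have "(real_of_int (v $ j))\<^sup>2 \<le> 1"
        unfolding abs_square_le_1 using srw_step_abs_nth_le_1
        by (metis of_int_abs of_int_le_1_iff)
      then have "(a * real_of_int (v $ j))\<^sup>2 \<le> a\<^sup>2"
        by (simp add: power_mult_distrib mult_left_le)
      then show "cosh (a * real_of_int (v $ j)) \<le> exp (a\<^sup>2)"
        using cosh_le_exp_power2 order_trans by fastforce
    qed
  qed simp
  finally show ?thesis .
qed

lemma srw_mgf_le:
  fixes a :: real
  shows "measure_pmf.expectation (srw n) (\<lambda>v :: int ^ 'd. exp (a * real_of_int (v $ j))) \<le> exp (a\<^sup>2 * n)"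
proof (induction n)
  case 0
  then show ?case by simp
next
  case (Suc n)
  let ?F = "\<lambda>v :: int ^ 'd. exp (a * real_of_int (v $ j))"
  have "measure_pmf.expectation (srw (Suc n)) ?F
      = measure_pmf.expectation (srw n) (\<lambda>c. measure_pmf.expectation srw_step (\<lambda>v. ?F (c + v)))"
    unfolding srw_Suc_bind by (simp add: expectation_bind_pmf_finite)
  also have "\<dots> = measure_pmf.expectation (srw n) ?F * measure_pmf.expectation srw_step ?F"
    by (simp add: distrib_left exp_add)
  also have "\<dots> \<le> exp (a\<^sup>2 * n) * exp (a\<^sup>2)"
    by (rule mult_mono[OF Suc.IH srw_step_mgf_le]) (auto intro: integral_nonneg_AE)
  also have "\<dots> = exp (a\<^sup>2 * Suc n)"
    by (simp add: exp_add[symmetric] algebra_simps)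
  finally show ?case .
qed

lemma exp_norm_le_sum_exp_nth:
  fixes z :: "real ^ 'n"
  assumes "c \<ge> 0"
  defines "b \<equiv> c * sqrt CARD('n)"
  shows "exp (c * norm z) \<le> (\<Sum>j\<in>UNIV. exp (b * z $ j) + exp (- b * z $ j))"
proof -
  obtain j where j: "infnorm z = \<bar>z $ j\<bar>"
  proof -
    have "infnorm z = Max (range (\<lambda>j. \<bar>z $ j\<bar>))"
      unfolding infnorm_cart by (simp add: cSup_eq_Max full_SetCompr_eq)
    also have "\<dots> \<in> range (\<lambda>j. \<bar>z $ j\<bar>)"
      by (rule Max_in) auto
    finally show ?thesis
      using that by blast
  qed
  have "c * norm z \<le> b * \<bar>z $ j\<bar>"
    using mult_left_mono[OF norm_le_infnorm[of z] assms(1)] by (simp add: b_def j mult.assoc)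
  then have "exp (c * norm z) \<le> exp (b * z $ j) + exp (- b * z $ j)"
    by (cases "z $ j \<ge> 0") (auto simp: add_increasing2 add_increasing)
  also have "\<dots> \<le> (\<Sum>j\<in>UNIV. exp (b * z $ j) + exp (- b * z $ j))"
    by (rule member_le_sum) (auto intro: add_nonneg_nonneg)
  finally show ?thesis .
qed

lemma real_vec_add: "real_vec (a + b) = real_vec a + real_vec b"
  by (simp add: real_vec_def vec_eq_iff)

lemma real_vec_zero [simp]: "real_vec 0 = 0"
  by (simp add: real_vec_def vec_eq_iff)

lemma real_vec_nth [simp]: "real_vec y $ j = of_int (y $ j)"
  by (simp add: real_vec_def)

lemma srw_exp_norm_moment_le:
  fixes c :: real
  assumes "c \<ge> 0"
  shows "measure_pmf.expectation (srw n) (\<lambda>S :: int ^ 'd. exp (c * norm (real_vec S)))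
     \<le> 2 * CARD('d) * exp (CARD('d) * c\<^sup>2 * n)"
proof -
  let ?b = "c * sqrt CARD('d)"
  have "measure_pmf.expectation (srw n) (\<lambda>S :: int ^ 'd. exp (c * norm (real_vec S)))
     \<le> measure_pmf.expectation (srw n)
          (\<lambda>S :: int ^ 'd. \<Sum>j\<in>UNIV. exp (?b * real_of_int (S $ j)) + exp (- ?b * real_of_int (S $ j)))"
    by (intro integral_mono) (use exp_norm_le_sum_exp_nth[OF assms, of "real_vec _"] in auto)
  also have "\<dots> = (\<Sum>j\<in>UNIV. measure_pmf.expectation (srw n) (\<lambda>S :: int ^ 'd. exp (?b * real_of_int (S $ j)))
                   + measure_pmf.expectation (srw n) (\<lambda>S. exp (- ?b * real_of_int (S $ j))))"
    by (simp add: integral_sum integral_add)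
  also have "\<dots> \<le> (\<Sum>j\<in>(UNIV :: 'd set). exp (?b\<^sup>2 * n) + exp ((- ?b)\<^sup>2 * n))"
    by (intro sum_mono add_mono srw_mgf_le)
  also have "\<dots> = 2 * CARD('d) * exp (CARD('d) * c\<^sup>2 * n)"
    by (simp add: power_mult_distrib algebra_simps)
  finally show ?thesis .
qed

text \<open>The factor \<open>sqrt n\<close> comes from \<open>r \<le> sqrt n * exp (r / sqrt n)\<close>, which costs only a
  constant factor in the exponential moment.\<close>

lemma srw_norm_exp_norm_moment_le:
  fixes c :: real
  assumes "c \<ge> 0" "n \<ge> 1"
  shows "measure_pmf.expectation (srw n)
           (\<lambda>S :: int ^ 'd. norm (real_vec S) * exp (c * norm (real_vec S)))
     \<le> 2 * CARD('d) * sqrt n * exp (2 * CARD('d) * c\<^sup>2 * n + 2 * CARD('d))"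
proof -
  define r where "r = sqrt n"
  have r0: "r > 0"
    using assms by (simp add: r_def)
  have pointwise: "y * exp (c * y) \<le> r * exp ((c + 1 / r) * y)" for y :: real
  proof -
    have "y \<le> r * exp (y / r)"
      using exp_ge_add_one_self[of "y / r"] r0 by (simp add: field_simps)
    then have "y * exp (c * y) \<le> r * exp (y / r) * exp (c * y)"
      by (simp add: mult_right_mono)
    also have "\<dots> = r * exp ((c + 1 / r) * y)"
      by (simp add: exp_add[symmetric] algebra_simps)
    finally show ?thesis .
  qed
  have square: "CARD('d) * (c + 1 / r)\<^sup>2 * n \<le> 2 * CARD('d) * c\<^sup>2 * n + 2 * CARD('d)"
  proof -
    have "(c + 1 / r)\<^sup>2 = 2 * c\<^sup>2 + 2 * (1 / r)\<^sup>2 - (c - 1 / r)\<^sup>2"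
      by (simp add: power2_eq_square algebra_simps)
    also have "\<dots> \<le> 2 * c\<^sup>2 + 2 / n"
      using assms by (simp add: r_def power_divide)
    finally have "(c + 1 / r)\<^sup>2 * n \<le> 2 * c\<^sup>2 * n + 2"
      using assms mult_right_mono[of _ _ "real n"] by (fastforce simp: field_simps)
    then show ?thesis
      using mult_left_mono[of _ _ "real CARD('d)"] by (fastforce simp: algebra_simps)
  qed
  have "measure_pmf.expectation (srw n)
           (\<lambda>S :: int ^ 'd. norm (real_vec S) * exp (c * norm (real_vec S)))
      \<le> measure_pmf.expectation (srw n) (\<lambda>S :: int ^ 'd. r * exp ((c + 1 / r) * norm (real_vec S)))"
    by (intro integral_mono pointwise) auto
  also have "\<dots> = r * measure_pmf.expectation (srw n) (\<lambda>S :: int ^ 'd. exp ((c + 1 / r) * norm (real_vec S)))"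
    by simp
  also have "\<dots> \<le> r * (2 * CARD('d) * exp (CARD('d) * (c + 1 / r)\<^sup>2 * n))"
    using r0 assms by (intro mult_left_mono srw_exp_norm_moment_le) auto
  also have "\<dots> \<le> r * (2 * CARD('d) * exp (2 * CARD('d) * c\<^sup>2 * n + 2 * CARD('d)))"
    using r0 square by simp
  finally show ?thesis
    by (simp add: r_def mult_ac)
qed

lemma abs_exp_diff_le: "\<bar>exp u - exp v\<bar> \<le> \<bar>u - v\<bar> * max (exp u) (exp v)" for u v :: real
proof -
  have "\<bar>exp u - exp v\<bar> \<le> \<bar>u - v\<bar> * max (exp u) (exp v)" if "v \<le> u" for u v :: real
  proof -
    have "exp u * (1 + (v - u)) \<le> exp u * exp (v - u)"
      by (intro mult_left_mono) auto
    then have "exp u - exp v \<le> (u - v) * exp u"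
      by (simp add: exp_diff algebra_simps)
    then show ?thesis
      using that by (simp add: max_def)
  qed
  from this[of v u] this[of u v] show ?thesis
    by (cases "v \<le> u") (auto simp: abs_minus_commute max.commute)
qed

lemma abs_exp_lipschitz_increment_le:
  fixes h :: "'a :: real_normed_vector \<Rightarrow> real"
  assumes "c-lipschitz_on UNIV h"
  shows "\<bar>exp (h p) - exp (h (p + q))\<bar>
           \<le> c * norm q * exp (h 0) * exp (c * norm p) * exp (c * norm q)"
proof -
  have c0: "c \<ge> 0"
    using assms by (rule lipschitz_on_nonneg)
  have growth: "h y \<le> h 0 + c * norm y" for y
    using lipschitz_on_normD[OF assms, of y 0] by auto
  have "h (p + q) \<le> h 0 + c * norm p + c * norm q"
    using growth[of "p + q"] mult_left_mono[OF norm_triangle_ineq[of p q] c0]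
    by (simp add: distrib_left)
  moreover have "h p \<le> h 0 + c * norm p + c * norm q"
    using growth[of p] mult_nonneg_nonneg[OF c0 norm_ge_zero[of q]] by linarith
  ultimately have max_le: "max (exp (h p)) (exp (h (p + q))) \<le> exp (h 0 + c * norm p + c * norm q)"
    by simp
  have "\<bar>h p - h (p + q)\<bar> \<le> c * norm q"
    using lipschitz_on_normD[OF assms, of p "p + q"] by simp
  then have "\<bar>exp (h p) - exp (h (p + q))\<bar> \<le> c * norm q * exp (h 0 + c * norm p + c * norm q)"
    using abs_exp_diff_le[of "h p" "h (p + q)"] max_le c0
    by (meson abs_ge_zero max.coboundedI1 exp_ge_zero mult_mono order_trans)
  then show ?thesis
    by (simp add: exp_add mult_ac)
qed

lemma lipschitz_on_scaled_potential:
  fixes g :: "'a :: real_normed_vector \<Rightarrow> real"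
  assumes "L-lipschitz_on UNIV g" "\<beta> \<ge> 0" "\<epsilon> \<ge> 0"
  shows "(\<beta> * L * \<epsilon>)-lipschitz_on UNIV (\<lambda>z. \<beta> * g (\<epsilon> *\<^sub>R z))"
proof -
  have "(L * (\<epsilon> * 1))-lipschitz_on UNIV (\<lambda>z. g (\<epsilon> *\<^sub>R z))"
    using assms by (intro lipschitz_on_compose2 lipschitz_on_cmult_nonneg lipschitz_on_id)
      (auto intro: lipschitz_on_subset)
  from lipschitz_on_cmult_real_nonneg[OF this assms(2)] show ?thesis
    by (simp add: mult_ac)
qed

lemma G_eps_0 [simp]: "G_eps \<beta> g \<epsilon> 0 x = exp (\<beta> * g (\<epsilon> *\<^sub>R real_vec x))"
  by (simp add: G_eps_def)

lemma G_eps_add: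
  "G_eps \<beta> g \<epsilon> (m + n) x = measure_pmf.expectation (srw m) (\<lambda>a. G_eps \<beta> g \<epsilon> n (a + x))"
  unfolding G_eps_def srw_add by (simp add: expectation_bind_pmf_finite add_ac)

lemma G_eps_0_diff_le:
  fixes g :: "real ^ 'd \<Rightarrow> real"
  assumes "c-lipschitz_on UNIV (\<lambda>z. \<beta> * g (\<epsilon> *\<^sub>R z))"
  shows "\<bar>G_eps \<beta> g \<epsilon> 0 y - G_eps \<beta> g \<epsilon> n y\<bar>
           \<le> c * exp (\<beta> * g 0) * exp (c * norm (real_vec y))
              * measure_pmf.expectation (srw n) (\<lambda>S :: int ^ 'd. norm (real_vec S) * exp (c * norm (real_vec S)))"
proof -
  let ?h = "\<lambda>z. \<beta> * g (\<epsilon> *\<^sub>R z)"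
  have pointwise: "\<bar>exp (?h (real_vec y)) - exp (?h (real_vec y + real_vec S))\<bar>
      \<le> (c * exp (\<beta> * g 0) * exp (c * norm (real_vec y))) * (norm (real_vec S) * exp (c * norm (real_vec S)))"
    for S :: "int ^ 'd"
    using abs_exp_lipschitz_increment_le[OF assms, of "real_vec y" "real_vec S"] by (simp add: mult_ac)
  have "G_eps \<beta> g \<epsilon> 0 y - G_eps \<beta> g \<epsilon> n y
      = measure_pmf.expectation (srw n) (\<lambda>S :: int ^ 'd. exp (?h (real_vec y)) - exp (?h (real_vec y + real_vec S)))"
    by (simp add: G_eps_def real_vec_add add.commute integral_diff)
  also have "\<bar>\<dots>\<bar> \<le> measure_pmf.expectation (srw n) (\<lambda>S :: int ^ 'd.
      (c * exp (\<beta> * g 0) * exp (c * norm (real_vec y))) * (norm (real_vec S) * exp (c * norm (real_vec S))))"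
    by (rule order_trans[OF integral_abs_bound integral_mono]) (use pointwise in simp_all)
  also have "\<dots> = c * exp (\<beta> * g 0) * exp (c * norm (real_vec y))
      * measure_pmf.expectation (srw n) (\<lambda>S :: int ^ 'd. norm (real_vec S) * exp (c * norm (real_vec S)))"
    by simp
  finally show ?thesis .
qed

lemma G_eps_increment_le:
  fixes g :: "real ^ 'd \<Rightarrow> real" and c :: real
  assumes "c-lipschitz_on UNIV (\<lambda>z. \<beta> * g (\<epsilon> *\<^sub>R z))" "n \<ge> 1"
  shows "\<bar>G_eps \<beta> g \<epsilon> s x - G_eps \<beta> g \<epsilon> (s + n) x\<bar>
           \<le> 4 * CARD('d)\<^sup>2 * exp (\<beta> * g 0 + 2 * CARD('d)) * c * sqrt n
              * exp (c * norm (real_vec x) + CARD('d) * c\<^sup>2 * s + 2 * CARD('d) * c\<^sup>2 * n)"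
proof -
  have c0: "c \<ge> 0"
    using assms(1) by (rule lipschitz_on_nonneg)
  define M where "M = measure_pmf.expectation (srw n)
    (\<lambda>S :: int ^ 'd. norm (real_vec S) * exp (c * norm (real_vec S)))"
  have M0: "M \<ge> 0"
    unfolding M_def by (intro integral_nonneg_AE) auto
  define K where "K = c * exp (\<beta> * g 0) * exp (c * norm (real_vec x)) * M"
  have "G_eps \<beta> g \<epsilon> s x - G_eps \<beta> g \<epsilon> (s + n) x
      = measure_pmf.expectation (srw s) (\<lambda>a :: int ^ 'd. G_eps \<beta> g \<epsilon> 0 (a + x) - G_eps \<beta> g \<epsilon> n (a + x))"
    using G_eps_add[of \<beta> g \<epsilon> s 0 x] by (simp add: G_eps_add integral_diff)
  also have "\<bar>\<dots>\<bar> \<le> measure_pmf.expectation (srw s) (\<lambda>a :: int ^ 'd. K * exp (c * norm (real_vec a)))"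
  proof (rule order_trans[OF integral_abs_bound integral_mono])
    fix a :: "int ^ 'd"
    have "exp (c * norm (real_vec (a + x))) \<le> exp (c * norm (real_vec x)) * exp (c * norm (real_vec a))"
      using mult_left_mono[OF norm_triangle_ineq[of "real_vec a" "real_vec x"] c0]
      by (simp add: real_vec_add distrib_left exp_add[symmetric])
    then have "c * exp (\<beta> * g 0) * exp (c * norm (real_vec (a + x))) * M
        \<le> c * exp (\<beta> * g 0) * (exp (c * norm (real_vec x)) * exp (c * norm (real_vec a))) * M"
      using c0 M0 by (intro mult_right_mono mult_left_mono) auto
    then show "\<bar>G_eps \<beta> g \<epsilon> 0 (a + x) - G_eps \<beta> g \<epsilon> n (a + x)\<bar> \<le> K * exp (c * norm (real_vec a))"
      using G_eps_0_diff_le[OF assms(1), of "a + x" n] by (simp add: K_def M_def mult_ac)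
  qed simp_all
  also have "\<dots> = K * measure_pmf.expectation (srw s) (\<lambda>a :: int ^ 'd. exp (c * norm (real_vec a)))"
    by simp
  also have "\<dots> \<le> c * exp (\<beta> * g 0) * exp (c * norm (real_vec x))
      * (2 * CARD('d) * sqrt n * exp (2 * CARD('d) * c\<^sup>2 * n + 2 * CARD('d)))
      * (2 * CARD('d) * exp (CARD('d) * c\<^sup>2 * s))"
    unfolding K_def M_def using c0 assms(2)
    by (intro mult_mono srw_norm_exp_norm_moment_le srw_exp_norm_moment_le)
       (auto intro!: integral_nonneg_AE)
  also have "\<dots> = 4 * CARD('d)\<^sup>2 * exp (\<beta> * g 0 + 2 * CARD('d)) * c * sqrt n
      * exp (c * norm (real_vec x) + CARD('d) * c\<^sup>2 * s + 2 * CARD('d) * c\<^sup>2 * n)"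
    by (simp add: exp_add power2_eq_square mult_ac)
  finally show ?thesis .
qed

lemma G_eps_time_increment_le:
  fixes g :: "real ^ 'd \<Rightarrow> real" and \<Lambda> :: real
  assumes lip: "(\<Lambda> * \<epsilon>)-lipschitz_on UNIV (\<lambda>z. \<beta> * g (\<epsilon> *\<^sub>R z))" and "\<epsilon> > 0" "s \<le> t"
  defines "d \<equiv> real CARD('d)"
  shows "\<bar>G_eps \<beta> g \<epsilon> s x - G_eps \<beta> g \<epsilon> t x\<bar>
           \<le> 4 * d\<^sup>2 * exp (\<beta> * g 0 + 2 * d) * \<Lambda> * \<epsilon> * sqrt \<bar>real t - real s\<bar>
              * exp ((\<Lambda> + 2 * d * \<Lambda>\<^sup>2) * (\<epsilon> * norm (real_vec x) + \<epsilon>\<^sup>2 * s + \<epsilon>\<^sup>2 * t))"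
proof (cases "s = t")
  case False
  define n where "n = t - s"
  have n: "t = s + n" "n \<ge> 1"
    using assms False by (auto simp: n_def)
  have \<Lambda>0: "\<Lambda> \<ge> 0"
    using lipschitz_on_nonneg[OF lip] \<open>\<epsilon> > 0\<close> by (simp add: zero_le_mult_iff)
  let ?C2 = "\<Lambda> + 2 * d * \<Lambda>\<^sup>2"
  have "\<Lambda> * (\<epsilon> * norm (real_vec x)) \<le> ?C2 * (\<epsilon> * norm (real_vec x))"
    using assms by (intro mult_right_mono) (auto simp: d_def)
  moreover have "d * (\<Lambda> * \<epsilon>)\<^sup>2 * s \<le> ?C2 * (\<epsilon>\<^sup>2 * s)"
    using mult_right_mono[of "d * \<Lambda>\<^sup>2" ?C2 "\<epsilon>\<^sup>2 * s"] \<Lambda>0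
    by (simp add: d_def power_mult_distrib mult_ac)
  moreover have "2 * d * (\<Lambda> * \<epsilon>)\<^sup>2 * n \<le> ?C2 * (\<epsilon>\<^sup>2 * t)"
    using mult_mono[of "2 * d * \<Lambda>\<^sup>2" ?C2 "\<epsilon>\<^sup>2 * n" "\<epsilon>\<^sup>2 * t"] \<Lambda>0
      mult_left_mono[of "real n" t "\<epsilon>\<^sup>2"] n
    by (simp add: d_def power_mult_distrib mult_ac)
  ultimately have exponent:
    "\<Lambda> * \<epsilon> * norm (real_vec x) + d * (\<Lambda> * \<epsilon>)\<^sup>2 * s + 2 * d * (\<Lambda> * \<epsilon>)\<^sup>2 * n
      \<le> ?C2 * (\<epsilon> * norm (real_vec x) + \<epsilon>\<^sup>2 * s + \<epsilon>\<^sup>2 * t)"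
    by (simp add: distrib_left mult.assoc)
  have "\<bar>G_eps \<beta> g \<epsilon> s x - G_eps \<beta> g \<epsilon> t x\<bar>
      \<le> 4 * d\<^sup>2 * exp (\<beta> * g 0 + 2 * d) * \<Lambda> * \<epsilon> * sqrt \<bar>real t - real s\<bar>
         * exp (\<Lambda> * \<epsilon> * norm (real_vec x) + d * (\<Lambda> * \<epsilon>)\<^sup>2 * s + 2 * d * (\<Lambda> * \<epsilon>)\<^sup>2 * n)"
    using G_eps_increment_le[OF lip n(2), of s x] by (simp add: n d_def mult_ac)
  also have "\<dots> \<le> 4 * d\<^sup>2 * exp (\<beta> * g 0 + 2 * d) * \<Lambda> * \<epsilon> * sqrt \<bar>real t - real s\<bar>
      * exp (?C2 * (\<epsilon> * norm (real_vec x) + \<epsilon>\<^sup>2 * s + \<epsilon>\<^sup>2 * t))"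
    using exponent \<Lambda>0 \<open>\<epsilon> > 0\<close> by (intro mult_left_mono) auto
  finally show ?thesis .
qed simp

theorem lemma5p3:
  fixes g :: "real ^ 'd \<Rightarrow> real" and \<beta> L :: real
  assumes "CARD('d) \<ge> 3" and "\<beta> > 0" and "L-lipschitz_on UNIV g"
  shows "\<exists>C1 > 0. \<exists>C2 > 0. \<forall>\<epsilon> > 0. \<forall>(s::nat) (t::nat) (x::int ^ 'd).
           \<bar>G_eps \<beta> g \<epsilon> s x - G_eps \<beta> g \<epsilon> t x\<bar>
             \<le> C1 * \<epsilon> * sqrt \<bar>real t - real s\<bar>
                * exp (C2 * (\<epsilon> * norm (real_vec x) + \<epsilon>\<^sup>2 * real s + \<epsilon>\<^sup>2 * real t))"
proof -
  \<comment> \<open>The estimate holds in every dimension. Replacing \<open>L\<close> by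
    \<open>L + 1\<close> keeps the constants positive when \<open>g\<close> is constant.\<close>
  define d where "d = real CARD('d)"
  define \<Lambda> where "\<Lambda> = \<beta> * (L + 1)"
  define C1 where "C1 = 4 * d\<^sup>2 * exp (\<beta> * g 0 + 2 * d) * \<Lambda>"
  define C2 where "C2 = \<Lambda> + 2 * d * \<Lambda>\<^sup>2"
  have "\<Lambda> > 0"
    using assms(2) lipschitz_on_nonneg[OF assms(3)] by (simp add: \<Lambda>_def)
  then have "C1 > 0" "C2 > 0"
    by (simp_all add: C1_def C2_def d_def add_pos_nonneg)
  have lip: "(\<Lambda> * \<epsilon>)-lipschitz_on UNIV (\<lambda>z. \<beta> * g (\<epsilon> *\<^sub>R z))" if "\<epsilon> > 0" for \<epsilon>
    using lipschitz_on_scaled_potential[OF lipschitz_on_le[OF assms(3)], of "L + 1" \<beta> \<epsilon>] assms(2) that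
    by (simp add: \<Lambda>_def)
  have "\<bar>G_eps \<beta> g \<epsilon> s x - G_eps \<beta> g \<epsilon> t x\<bar>
      \<le> C1 * \<epsilon> * sqrt \<bar>real t - real s\<bar>
         * exp (C2 * (\<epsilon> * norm (real_vec x) + \<epsilon>\<^sup>2 * real s + \<epsilon>\<^sup>2 * real t))"
    if "\<epsilon> > 0" for \<epsilon> s t x
    using G_eps_time_increment_le[OF lip[OF that] that, of s t x]
      G_eps_time_increment_le[OF lip[OF that] that, of t s x]
    by (cases "s \<le> t") (auto simp: C1_def C2_def d_def abs_minus_commute add_ac)
  with \<open>C1 > 0\<close> \<open>C2 > 0\<close> show ?thesis
    by blast
qed

end
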